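(* Consider, for $x\ge0$, the planar system $$\dot x=1,\qquad \dot y=-ay-\sin\!\left[\pi x\left(1+\tfrac12\lambda\right)\right],$$ with $\lambda=\operatorname{sign}(y)$ for $y\ne0$ and $\lambda\in(-1,1)$ on $y=0$. For all $a>0$ there exists $x_a\in(2,4)$ such that the system has a unique sliding $4$-periodic solution $y_d(x)$ which lies in $\overline S_-=\{y\le 0\}$ and satisfies $$y_d(x)<0 \text{ for } x\in(4n,4n+x_a),\qquad y_d(x)=0 \text{ for } x\in\{0\}\cup[4n+x_a,4(n+1)],\qquad n\in\mathbb{N}.$$
   Context: For $y>0$ the system is $\dot y=-ay-\sin(3\pi x/2)$ and for $y<0$ it is $\dot y=-ay-\sin(\pi x/2)$. The sliding manifold is $\Lambda^N=\{(x,0):x\in(\frac{2n}{3},2n),\ n\ge1\}$, the set of points on $y=0$ where some $\lambda\in(-1,1)$ gives $\sin[\pi x(1+\lambda/2)]=0$; a solution may remain on $y=0$ (with $\dot x=1$) over an interval only while on $\Lambda^N$. A periodic solution is sliding if part of it lies on $\Lambda^N$. *)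

theory Defs
  imports "HOL-Analysis.Analysis"
begin

text \<open>Abscissae of the sliding manifold Lambda^N = {(x,0) : x in (2n/3, 2n), n >= 1}.\<close>
definition sliding_set :: "real set" where
  "sliding_set = {x. \<exists>n::nat. n \<ge> 1 \<and> 2 * real n / 3 < x \<and> x < 2 * real n}"

definition sys_rhs :: "real \<Rightarrow> real \<Rightarrow> real \<Rightarrow> real \<Rightarrow> real" where
  "sys_rhs a lam x y = - a * y - sin (pi * x * (1 + lam / 2))"

definition admissible_lambda :: "real \<Rightarrow> real \<Rightarrow> bool" where
  "admissible_lambda y lam \<longleftrightarrow> (if y \<noteq> 0 then lam = sgn y else -1 < lam \<and> lam < 1)"

text \<open>A solution for x >= 0 (x is the time, since dx/dt = 1): continuous on [0,oo),
  satisfying the differential equation with an admissible lambda at every x > 0 outside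
  a countable exceptional set, and remaining on y = 0 over an interval only while on
  Lambda^N.\<close>
definition is_solution :: "real \<Rightarrow> (real \<Rightarrow> real) \<Rightarrow> bool" where
  "is_solution a y \<longleftrightarrow>
     continuous_on {0..} y \<and>
     (\<exists>S. countable S \<and>
        (\<forall>x. 0 < x \<and> x \<notin> S \<longrightarrow>
           (\<exists>lam. admissible_lambda (y x) lam \<and>
                  (y has_real_derivative sys_rhs a lam x (y x)) (at x)))) \<and>
     (\<forall>c d. 0 \<le> c \<and> c < d \<and> (\<forall>x\<in>{c<..<d}. y x = 0) \<longrightarrow> {c<..<d} \<subseteq> sliding_set)"

definition periodic4 :: "(real \<Rightarrow> real) \<Rightarrow> bool" where
  "periodic4 y \<longleftrightarrow> (\<forall>x\<ge>0. y (x + 4) = y x)"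

definition is_sliding :: "(real \<Rightarrow> real) \<Rightarrow> bool" where
  "is_sliding y \<longleftrightarrow>
     (\<exists>c d. 0 \<le> c \<and> c < d \<and> (\<forall>x\<in>{c<..<d}. y x = 0) \<and> {c<..<d} \<subseteq> sliding_set)"

definition in_closed_lower :: "(real \<Rightarrow> real) \<Rightarrow> bool" where
  "in_closed_lower y \<longleftrightarrow> (\<forall>x\<ge>0. y x \<le> 0)"

end

(* In y < 0 the equation is linear, y' = -a y - sin (pi x / 2); with Phi' = e^(a x) sin (pi x / 2)
   its solution leaving y = 0 at r is -e^(-a x) (Phi x - Phi r). Phi increases on [0, 2] and
   decreases on [2, 4], and Phi 4 < Phi 0, so the arc leaving the origin comes back to y = 0 at
   the unique x_a in (2, 4) with Phi x_a = Phi 0; from there the solution slides along y = 0,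
   which belongs to the sliding manifold for x > 2/3, up to x = 4.
   Conversely, let z <= 0 be a 4-periodic sliding solution. Any arc that starts on y = 0 at a
   point of [0, 4] ends at x = 4 on or above the axis, so z 4 = z 0 = 0. z cannot slide before
   x = 2/3 and an arc from y = 0 meets it again only where Phi repeats a value, so z has no zeros
   in (0, 2/3); hence z follows the arc from the origin up to x_a, and afterwards it must stay on
   y = 0, since every arc starting in [x_a, 4] would enter y > 0. *)
theory Submission
  imports Defs
begin

section \<open>Zero derivative off a countable set\<close>

lemma continuous_on_last_level:
  fixes f :: "real \<Rightarrow> real"
  assumes "continuous_on {u..s} f" "u \<le> s" "f u = c"
  obtains r where "r \<in> {u..s}" "f r = c" "\<And>t. t \<in> {r<..s} \<Longrightarrow> f t \<noteq> c"
proof -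
  let ?Z = "{t \<in> {u..s}. f t = c}"
  have "compact ?Z"
    using continuous_closed_preimage_constant[OF assms(1)]
    by (auto intro: bounded_subset[of "{u..s}"] simp: compact_eq_bounded_closed)
  moreover have "u \<in> ?Z" using assms by auto
  ultimately obtain r where r: "r \<in> ?Z" and max: "\<forall>t\<in>?Z. t \<le> r"
    using compact_attains_sup by blast
  have "f t \<noteq> c" if t: "t \<in> {r<..s}" for t
  proof
    assume "f t = c"
    with r t have "t \<in> ?Z" by auto
    with max t show False by auto
  qed
  with r show thesis by (intro that) auto
qed

lemma continuous_on_first_level:
  fixes f :: "real \<Rightarrow> real"
  assumes "continuous_on {u..s} f" "u \<le> s" "f s = c"
  obtains q where "q \<in> {u..s}" "f q = c" "\<And>t. t \<in> {u..<q} \<Longrightarrow> f t \<noteq> c"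
proof -
  let ?Z = "{t \<in> {u..s}. f t = c}"
  have "compact ?Z"
    using continuous_closed_preimage_constant[OF assms(1)]
    by (auto intro: bounded_subset[of "{u..s}"] simp: compact_eq_bounded_closed)
  moreover have "s \<in> ?Z" using assms by auto
  ultimately obtain q where q: "q \<in> ?Z" and min: "\<forall>t\<in>?Z. q \<le> t"
    using compact_attains_inf by blast
  have "f t \<noteq> c" if t: "t \<in> {u..<q}" for t
  proof
    assume "f t = c"
    with q t have "t \<in> ?Z" by auto
    with min t show False by auto
  qed
  with q show thesis by (intro that) auto
qed

lemma DERIV_zero_countable_imp_le:
  fixes w :: "real \<Rightarrow> real"
  assumes cont: "continuous_on {r..q} w" and "countable C"
    and deriv: "\<And>t. t \<in> {r<..<q} - C \<Longrightarrow> (w has_real_derivative 0) (at t)"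
    and t: "t \<in> {r..q}"
  shows "w t \<le> w r"
proof (rule ccontr)
  assume "\<not> w t \<le> w r"
  then have "r < t" using t by (cases "r = t") auto
  define \<delta> where "\<delta> = (w t - w r) / (2 * (t - r))"
  define v where "v s = w s - w r - \<delta> * (s - r)" for s
  have "0 < \<delta>" using \<open>r < t\<close> \<open>\<not> w t \<le> w r\<close> by (simp add: \<delta>_def)
  have "v r = 0" by (simp add: v_def)
  moreover have "v t = (w t - w r) / 2" using \<open>r < t\<close> by (simp add: v_def \<delta>_def field_simps)
  ultimately have "0 < v t" using \<open>\<not> w t \<le> w r\<close> by simp
  have cont_v: "continuous_on {r..t} v"
    unfolding v_def using t by (intro continuous_intros continuous_on_subset[OF cont]) auto
  txt \<open>Pick a level that \<open>v\<close> attains only outside \<open>C\<close>: the derivative is known wherever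
    \<open>v\<close> crosses it.\<close>
  have "uncountable {0<..<v t}" "countable (v ` C)"
    using \<open>0 < v t\<close> \<open>countable C\<close> by (auto simp: uncountable_open_interval)
  then obtain y where y: "y \<in> {0<..<v t}" "y \<notin> v ` C"
    by (metis Diff_iff countable_subset subsetI)
  obtain x0 where x0: "x0 \<in> {r..t}" "v x0 = y"
    using IVT'[of v r y t] y \<open>v r = 0\<close> cont_v \<open>r < t\<close> by auto
  obtain s where s: "s \<in> {x0..t}" "v s = y" and above_ne: "\<And>u. u \<in> {s<..t} \<Longrightarrow> v u \<noteq> y"
    using continuous_on_last_level[of x0 t v y] continuous_on_subset[OF cont_v] x0 by auto
  have above: "y < v u" if u: "u \<in> {s<..t}" for u
  proof (rule ccontr)
    assume "\<not> y < v u"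
    moreover have "continuous_on {u..t} v"
      using u s x0 by (intro continuous_on_subset[OF cont_v]) auto
    ultimately obtain x where "u \<le> x" "x \<le> t" "v x = y"
      using IVT'[of v u y t] y u by auto
    then show False using above_ne[of x] u by auto
  qed
  have "s \<noteq> r" "s \<noteq> t" "s \<notin> C"
    using s y \<open>v r = 0\<close> by auto
  then have "s \<in> {r<..<q} - C"
    using s x0 t by auto
  then have "(w has_real_derivative 0) (at s)"
    by (rule deriv)
  then have "(v has_real_derivative 0 - \<delta> * 1) (at s)"
    unfolding v_def by (auto intro!: derivative_eq_intros)
  then obtain d where "0 < d" and d: "\<And>h. 0 < h \<Longrightarrow> h < d \<Longrightarrow> v (s + h) < v s"
    using DERIV_neg_dec_right[of v "- \<delta>" s] \<open>0 < \<delta>\<close> by auto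
  define h where "h = min (d / 2) (t - s)"
  have "0 < h" "h < d" "s + h \<in> {s<..t}"
    using \<open>0 < d\<close> s \<open>s \<noteq> t\<close> by (auto simp: h_def min_def)
  then show False using d[of h] above[of "s + h"] s by auto
qed

lemma DERIV_zero_countable_imp_constant:
  fixes w :: "real \<Rightarrow> real"
  assumes "continuous_on {r..q} w" and "countable C"
    and "\<And>t. t \<in> {r<..<q} - C \<Longrightarrow> (w has_real_derivative 0) (at t)"
    and "t \<in> {r..q}"
  shows "w t = w r"
proof -
  have "- w t \<le> - w r"
    using assms by (intro DERIV_zero_countable_imp_le[where w = "\<lambda>t. - w t"])
      (auto intro: continuous_intros DERIV_minus[where D = 0, simplified])
  with DERIV_zero_countable_imp_le[OF assms] show ?thesis by simp
qed

section \<open>Periodic extensions and the sliding manifold\<close>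

lemma floor_divide_bounds:
  fixes x p :: real
  assumes "0 < p"
  shows "p * \<lfloor>x / p\<rfloor> \<le> x" and "x < p * \<lfloor>x / p\<rfloor> + p"
  using floor_divide_lower[OF assms, of x] floor_divide_upper[OF assms, of x]
  by (simp_all add: algebra_simps)

lemma periodic_extension_eq:
  fixes h :: "real \<Rightarrow> 'a" and k :: int
  assumes "0 < p" "h 0 = h p" "p * k \<le> x" "x \<le> p * k + p"
  shows "h (x - p * \<lfloor>x / p\<rfloor>) = h (x - p * k)"
proof (cases "x = p * k + p")
  case True
  then have "x / p = of_int (k + 1)" using \<open>0 < p\<close> by (simp add: field_simps)
  then have "\<lfloor>x / p\<rfloor> = k + 1" by simp
  with True \<open>h 0 = h p\<close> show ?thesis by (simp add: algebra_simps)
next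
  case False
  then have "\<lfloor>x / p\<rfloor> = k"
    using assms by (intro floor_unique) (auto simp: field_simps)
  then show ?thesis by simp
qed

lemma continuous_on_periodic_extension:
  fixes h :: "real \<Rightarrow> 'a::topological_space"
  assumes "0 < p" "continuous_on {0..p} h" "h 0 = h p"
  shows "continuous_on UNIV (\<lambda>x. h (x - p * \<lfloor>x / p\<rfloor>))"
proof -
  let ?g = "\<lambda>x. h (x - p * \<lfloor>x / p\<rfloor>)"
  have segment: "continuous_on {p * k..p * k + p} ?g" for k :: int
  proof -
    have "continuous_on {p * k..p * k + p} (\<lambda>x. h (x - p * k))"
      by (intro continuous_on_compose2[OF assms(2)] continuous_intros) auto
    then show ?thesis
    proof (rule continuous_on_eq)
      fix x assume "x \<in> {p * k..p * k + p}"
      then show "h (x - p * k) = ?g x"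
        using periodic_extension_eq[OF assms(1,3), of k x] by simp
    qed
  qed
  have "isCont ?g x" for x
  proof -
    define k where "k = \<lfloor>x / p\<rfloor>"
    have "continuous_on ({p * (k - 1)..p * (k - 1) + p} \<union> {p * k..p * k + p}) ?g"
      by (intro continuous_on_closed_Un segment) auto
    moreover have "p * of_int (k - 1) = p * k - p" by (simp add: algebra_simps)
    ultimately have "continuous_on {p * k - p<..<p * k + p} ?g"
      by (elim continuous_on_subset) auto
    moreover have "x \<in> {p * k - p<..<p * k + p}"
      using floor_divide_bounds[OF assms(1), of x] assms(1) unfolding k_def by auto
    ultimately show ?thesis
      by (simp add: continuous_on_eq_continuous_at)
  qed
  then show ?thesis by (simp add: continuous_at_imp_continuous_on)
qed

lemma periodic4_shift:
  assumes "periodic4 z" "0 \<le> x"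
  shows "z (x + 4 * real n) = z x"
proof (induction n)
  case (Suc n)
  have "z (x + 4 * real (Suc n)) = z (x + 4 * real n + 4)" by (simp add: algebra_simps)
  also have "\<dots> = z (x + 4 * real n)" using assms unfolding periodic4_def by simp
  finally show ?case using Suc by simp
qed simp

lemma periodic4_reduce:
  assumes "periodic4 z" "0 \<le> x"
  shows "z (x - 4 * of_int \<lfloor>x / 4\<rfloor>) = z x"
proof -
  define u where "u = x - 4 * of_int \<lfloor>x / 4\<rfloor>"
  define n where "n = nat \<lfloor>x / 4\<rfloor>"
  have "0 \<le> u" using floor_divide_bounds[of 4 x] by (simp add: u_def)
  moreover have "x = u + 4 * real n" using \<open>0 \<le> x\<close> by (simp add: u_def n_def)
  moreover have "z (u + 4 * real n) = z u" using \<open>0 \<le> u\<close> by (rule periodic4_shift[OF assms(1)])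
  ultimately show ?thesis unfolding u_def[symmetric] by simp
qed

lemma sliding_set_eq: "sliding_set = {2/3<..}"
proof (intro equalityI subsetI)
  fix x assume "x \<in> sliding_set"
  then obtain n :: nat where "1 \<le> n" "2 * real n / 3 < x" unfolding sliding_set_def by auto
  then show "x \<in> {2/3<..}" by simp
next
  fix x :: real assume "x \<in> {2/3<..}"
  define n where "n = nat \<lfloor>x / 2\<rfloor> + 1"
  have "\<lfloor>x / 2\<rfloor> = 0 \<or> 1 < x"
    using \<open>x \<in> {2/3<..}\<close> by (auto simp: floor_eq_iff)
  then have "2 * real n / 3 < x" "x < 2 * real n"
    using \<open>x \<in> {2/3<..}\<close> floor_divide_bounds[of 2 x] by (auto simp: n_def)
  then show "x \<in> sliding_set" unfolding sliding_set_def n_def by fastforce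
qed

lemma sliding_set_admissible_lambda:
  assumes "x \<in> sliding_set"
  obtains lam where "admissible_lambda 0 lam" "sys_rhs a lam x 0 = 0"
proof -
  obtain n :: nat where n: "2 * real n / 3 < x" "x < 2 * real n"
    using assms unfolding sliding_set_def by auto
  then have "0 < x" by simp
  define lam where "lam = 2 * real n / x - 2"
  have "-1 < lam" "lam < 1"
    using n \<open>0 < x\<close> by (auto simp: lam_def field_simps)
  moreover have "pi * x * (1 + lam / 2) = real n * pi"
    using \<open>0 < x\<close> by (simp add: lam_def field_simps)
  then have "sin (pi * x * (1 + lam / 2)) = 0" by (simp only: sin_npi)
  ultimately show thesis
    by (intro that[of lam]) (simp_all add: admissible_lambda_def sys_rhs_def)
qed

section \<open>Arcs in the lower half-plane\<close>

text \<open>\<open>Phi a\<close> is a primitive of \<open>\<lambda>t. exp (a * t) * sin (pi * t / 2)\<close>. In \<open>y < 0\<close> we have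
  \<open>\<lambda> = -1\<close>, the equation becomes \<open>y' = - a * y - sin (pi * x / 2)\<close>, and its solution through
  \<open>(r, 0)\<close> is \<open>lower_arc a r\<close>.\<close>
definition Phi :: "real \<Rightarrow> real \<Rightarrow> real" where
  "Phi a t = exp (a * t) * (a * sin (pi * t / 2) - pi / 2 * cos (pi * t / 2)) / (a\<^sup>2 + pi\<^sup>2 / 4)"

definition lower_arc :: "real \<Rightarrow> real \<Rightarrow> real \<Rightarrow> real" where
  "lower_arc a r x = - exp (- a * x) * (Phi a x - Phi a r)"

lemma Phi_has_real_derivative:
  "(Phi a has_real_derivative exp (a * t) * sin (pi * t / 2)) (at t)"
proof -
  define D where "D = a\<^sup>2 + pi\<^sup>2 / 4"
  define g where "g t = a * sin (pi * t / 2) - pi / 2 * cos (pi * t / 2)" for t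
  define g' where "g' = pi / 2 * (a * cos (pi * t / 2) + pi / 2 * sin (pi * t / 2))"
  have "0 < D" unfolding D_def by (intro add_nonneg_pos) auto
  have "((\<lambda>t. exp (a * t)) has_real_derivative exp (a * t) * a) (at t)"
    by (auto intro!: derivative_eq_intros)
  moreover have "(g has_real_derivative g') (at t)"
    unfolding g_def [abs_def] g'_def by (auto intro!: derivative_eq_intros simp: algebra_simps)
  ultimately have "(Phi a has_real_derivative (exp (a * t) * g' + exp (a * t) * a * g t) / D) (at t)"
    unfolding Phi_def [abs_def] D_def[symmetric] g_def[symmetric] by (intro DERIV_cdivide DERIV_mult')
  moreover have "exp (a * t) * g' + exp (a * t) * a * g t = exp (a * t) * sin (pi * t / 2) * D"
    unfolding D_def g_def g'_def by (simp add: algebra_simps power2_eq_square)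
  ultimately show ?thesis using \<open>0 < D\<close> by simp
qed

lemma continuous_on_Phi: "continuous_on S (Phi a)"
  using DERIV_continuous[OF Phi_has_real_derivative]
  by (simp add: continuous_at_imp_continuous_on)

lemma Phi_strict_increasing:
  assumes "0 \<le> u" "u < v" "v \<le> 2"
  shows "Phi a u < Phi a v"
proof (rule DERIV_pos_imp_increasing_open[OF \<open>u < v\<close> _ continuous_on_Phi])
  fix t assume "u < t" "t < v"
  with assms have "sin (pi * t / 2) > 0" by (intro sin_gt_zero) auto
  then show "\<exists>y. (Phi a has_real_derivative y) (at t) \<and> 0 < y"
    using Phi_has_real_derivative by (intro exI[of _ "exp (a * t) * sin (pi * t / 2)"]) auto
qed

lemma Phi_strict_decreasing:
  assumes "2 \<le> u" "u < v" "v \<le> 4"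
  shows "Phi a v < Phi a u"
proof (rule DERIV_neg_imp_decreasing_open[OF \<open>u < v\<close> _ continuous_on_Phi])
  fix t assume "u < t" "t < v"
  with assms have "sin (pi * t / 2) < 0" by (intro sin_lt_zero) auto
  then show "\<exists>y. (Phi a has_real_derivative y) (at t) \<and> y < 0"
    using Phi_has_real_derivative
    by (intro exI[of _ "exp (a * t) * sin (pi * t / 2)"]) (auto simp: mult_pos_neg)
qed

lemma Phi_4_less_Phi_0:
  assumes "0 < a"
  shows "Phi a 4 < Phi a 0"
proof -
  have "pi * 4 / 2 = 2 * pi" by simp
  moreover have "1 < exp (4 * a)" using assms by simp
  ultimately show ?thesis
    by (simp add: Phi_def divide_strict_right_mono add_pos_pos)
qed

lemma Phi_4_le:
  assumes "0 < a" "0 \<le> r" "r \<le> 4"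
  shows "Phi a 4 \<le> Phi a r"
proof (cases "r \<le> 2")
  case True
  then have "Phi a 0 \<le> Phi a r"
    using Phi_strict_increasing[of 0 r a] assms by (cases "r = 0") auto
  then show ?thesis using Phi_4_less_Phi_0[OF \<open>0 < a\<close>] by simp
next
  case False
  then show ?thesis using Phi_strict_decreasing[of r 4 a] assms by (cases "r = 4") auto
qed

lemma Phi_returns_to_Phi_0:
  assumes "0 < a"
  obtains xa where "2 < xa" "xa < 4" "Phi a xa = Phi a 0"
proof -
  have "Phi a 0 < Phi a 2" by (rule Phi_strict_increasing) auto
  then obtain xa where "2 \<le> xa" "xa \<le> 4" "Phi a xa = Phi a 0"
    using IVT2'[of "Phi a" 4 "Phi a 0" 2] Phi_4_less_Phi_0[OF assms] continuous_on_Phi by force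
  moreover have "xa \<noteq> 2" "xa \<noteq> 4"
    using calculation \<open>Phi a 0 < Phi a 2\<close> Phi_4_less_Phi_0[OF assms] by auto
  ultimately have "2 < xa" "xa < 4" "Phi a xa = Phi a 0" by auto
  then show thesis by (rule that)
qed

lemma lower_arc_has_real_derivative:
  "(lower_arc a r has_real_derivative sys_rhs a (-1) x (lower_arc a r x)) (at x)"
proof -
  have "((\<lambda>x. exp (- a * x)) has_real_derivative - a * exp (- a * x)) (at x)"
    by (auto intro!: derivative_eq_intros)
  then have "(lower_arc a r has_real_derivative
      - (- a * exp (- a * x)) * (Phi a x - Phi a r)
      + (exp (a * x) * sin (pi * x / 2) - 0) * - exp (- a * x)) (at x)"
    unfolding lower_arc_def [abs_def]
    by (rule DERIV_mult[OF DERIV_minus DERIV_diff[OF Phi_has_real_derivative DERIV_const]])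
  moreover have "exp (- a * x) * exp (a * x) = 1" by (simp add: exp_minus)
  ultimately show ?thesis
    by (elim DERIV_cong) (simp add: sys_rhs_def lower_arc_def algebra_simps)
qed

lemma sys_rhs_lower_periodic:
  fixes x :: real and k :: int
  shows "sys_rhs a (-1) (x + 4 * k) y = sys_rhs a (-1) x y"
proof -
  have "pi * (x + 4 * k) * (1 + -1 / 2) = pi * x * (1 + -1 / 2) + 2 * pi * k"
    by (simp add: algebra_simps)
  then show ?thesis
    by (simp only: sys_rhs_def sin_add sin_int_2pin cos_int_2pin)
qed

locale nonpositive_solution =
  fixes a :: real and z :: "real \<Rightarrow> real"
  assumes solution: "is_solution a z" and nonpositive: "in_closed_lower z"
begin

lemma continuous_on_interval: "0 \<le> u \<Longrightarrow> continuous_on {u..v} z"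
  using solution unfolding is_solution_def by (auto elim: continuous_on_subset)

lemma le_0: "0 \<le> x \<Longrightarrow> z x \<le> 0"
  using nonpositive unfolding in_closed_lower_def by simp

lemma zero_interval_subset_sliding_set:
  "0 \<le> c \<Longrightarrow> c < d \<Longrightarrow> (\<And>x. x \<in> {c<..<d} \<Longrightarrow> z x = 0) \<Longrightarrow> {c<..<d} \<subseteq> sliding_set"
  using solution unfolding is_solution_def by blast

lemma eq_lower_arc:
  assumes "0 \<le> r" "r < q" "z r = 0" and nonzero: "\<And>t. t \<in> {r<..<q} \<Longrightarrow> z t \<noteq> 0"
    and "t \<in> {r..q}"
  shows "z t = lower_arc a r t"
proof -
  obtain S where "countable S" and deriv: "\<And>x. 0 < x \<Longrightarrow> x \<notin> S \<Longrightarrow>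
      \<exists>lam. admissible_lambda (z x) lam \<and> (z has_real_derivative sys_rhs a lam x (z x)) (at x)"
    using solution unfolding is_solution_def by blast
  define w where "w t = exp (a * t) * z t + Phi a t" for t
  have cont: "continuous_on {r..q} w"
    unfolding w_def using \<open>0 \<le> r\<close>
    by (intro continuous_intros continuous_on_Phi continuous_on_interval)
  have deriv_w: "(w has_real_derivative 0) (at x)" if x: "x \<in> {r<..<q} - S" for x
  proof -
    have "z x < 0" using le_0[of x] nonzero[of x] x \<open>0 \<le> r\<close> by force
    then obtain lam where "admissible_lambda (z x) lam"
      and dz: "(z has_real_derivative sys_rhs a lam x (z x)) (at x)"
      using deriv[of x] x \<open>0 \<le> r\<close> by force
    with \<open>z x < 0\<close> have "lam = -1" by (simp add: admissible_lambda_def)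
    have "(w has_real_derivative
        exp (a * x) * sys_rhs a lam x (z x) + exp (a * x) * a * z x + exp (a * x) * sin (pi * x / 2)) (at x)"
      unfolding w_def [abs_def]
      by (intro DERIV_add DERIV_mult' dz Phi_has_real_derivative) (auto intro!: derivative_eq_intros)
    then show ?thesis
      using \<open>lam = -1\<close> by (simp add: sys_rhs_def algebra_simps)
  qed
  have "w t = w r"
    using DERIV_zero_countable_imp_constant[OF cont \<open>countable S\<close> deriv_w \<open>t \<in> {r..q}\<close>] .
  then show ?thesis
    using \<open>z r = 0\<close> by (simp add: w_def lower_arc_def exp_minus field_simps)
qed

lemma Phi_eq_at_consecutive_zeros:
  assumes "0 \<le> r" "r < q" "z r = 0" "z q = 0" "\<And>t. t \<in> {r<..<q} \<Longrightarrow> z t \<noteq> 0"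
  shows "Phi a q = Phi a r"
  using eq_lower_arc[OF assms(1-3,5), of q] \<open>z q = 0\<close> \<open>r < q\<close> by (simp add: lower_arc_def)

text \<open>After its last zero \<open>r'\<close> before \<open>s\<close>, \<open>z\<close> follows \<open>lower_arc a r'\<close>, which is
  nonnegative at \<open>s\<close> when \<open>Phi a s \<le> Phi a r'\<close>.\<close>
lemma zero_if_Phi_le:
  assumes "0 \<le> r" "r \<le> s" "z r = 0" and Phi_le: "\<And>r'. r' \<in> {r..s} \<Longrightarrow> Phi a s \<le> Phi a r'"
  shows "z s = 0"
proof -
  obtain r' where r': "r' \<in> {r..s}" "z r' = 0" and nonzero: "\<And>t. t \<in> {r'<..s} \<Longrightarrow> z t \<noteq> 0"
    using continuous_on_last_level[OF continuous_on_interval] assms(1-3) by blast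
  show ?thesis
  proof (cases "r' = s")
    case False
    then have "z s = lower_arc a r' s"
      using r' nonzero assms(1) by (intro eq_lower_arc) auto
    also have "\<dots> \<ge> 0"
      using Phi_le[OF r'(1)] by (simp add: lower_arc_def mult_nonneg_nonpos)
    finally show ?thesis using le_0[of s] assms(1,2) by simp
  qed (use r' in simp)
qed

end

section \<open>The sliding cycle\<close>

locale sliding_cycle =
  fixes a xa :: real
  assumes a_pos: "0 < a" and xa_gt_2: "2 < xa" and xa_lt_4: "xa < 4"
    and Phi_xa: "Phi a xa = Phi a 0"
begin

lemma Phi_0_less: "0 < t \<Longrightarrow> t < xa \<Longrightarrow> Phi a 0 < Phi a t"
  using Phi_strict_increasing[of 0 t a] Phi_strict_decreasing[of t xa a]
    Phi_strict_increasing[of 0 2 a] Phi_xa xa_lt_4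
  by (cases "t \<le> 2") auto

definition profile :: "real \<Rightarrow> real" where
  "profile t = (if t \<le> xa then lower_arc a 0 t else 0)"

definition cycle :: "real \<Rightarrow> real" where
  "cycle x = profile (x - 4 * of_int \<lfloor>x / 4\<rfloor>)"

lemma profile_neg: "0 < t \<Longrightarrow> t < xa \<Longrightarrow> profile t < 0"
  using Phi_0_less[of t] by (simp add: profile_def lower_arc_def mult_pos_pos)

lemma profile_eq_0: "t = 0 \<or> xa \<le> t \<Longrightarrow> profile t = 0"
  using xa_gt_2 Phi_xa by (auto simp: profile_def lower_arc_def)

lemma continuous_on_profile: "continuous_on {0..4} profile"
proof -
  have "continuous_on {0..xa} (lower_arc a 0)"
    unfolding lower_arc_def by (intro continuous_intros continuous_on_Phi)
  then have "continuous_on {0..xa} profile"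
    by (rule continuous_on_eq) (simp add: profile_def)
  moreover have "continuous_on {xa..4} profile"
    by (rule continuous_on_eq[OF continuous_on_const]) (simp add: profile_eq_0)
  ultimately have "continuous_on ({0..xa} \<union> {xa..4}) profile"
    by (intro continuous_on_closed_Un) auto
  moreover have "{0..xa} \<union> {xa..4} = {0..4::real}" using xa_gt_2 xa_lt_4 by auto
  ultimately show ?thesis by simp
qed

lemma cycle_eq_profile:
  fixes x :: real and k :: int
  assumes "4 * k \<le> x" "x \<le> 4 * k + 4"
  shows "cycle x = profile (x - 4 * k)"
  unfolding cycle_def using periodic_extension_eq[of 4 profile k x] assms profile_eq_0 xa_lt_4 by simp

lemma cycle_neg:
  fixes x :: real and k :: int
  assumes "4 * k < x" "x < 4 * k + xa"
  shows "cycle x < 0"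
  using cycle_eq_profile[of k x] profile_neg[of "x - 4 * k"] assms xa_lt_4 by simp

lemma cycle_eq_0:
  fixes x :: real and k :: int
  assumes "4 * k + xa \<le> x" "x \<le> 4 * k + 4"
  shows "cycle x = 0"
  using cycle_eq_profile[of k x] profile_eq_0[of "x - 4 * k"] assms xa_gt_2 by simp

lemma cycle_le_0: "cycle x \<le> 0"
proof -
  have "0 \<le> x - 4 * of_int \<lfloor>x / 4\<rfloor>" using floor_divide_bounds[of 4 x] by simp
  then show ?thesis
    unfolding cycle_def using profile_neg profile_eq_0 by (smt (verit))
qed

lemma cycle_0: "cycle 0 = 0"
  by (simp add: cycle_def profile_eq_0)

lemma continuous_cycle: "continuous_on UNIV cycle"
  unfolding cycle_def [abs_def]
  using continuous_on_periodic_extension[of 4 profile] continuous_on_profile profile_eq_0 xa_lt_4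
  by simp

lemma periodic4_cycle: "periodic4 cycle"
proof -
  have "\<lfloor>(x + 4) / 4\<rfloor> = \<lfloor>x / 4\<rfloor> + 1" for x :: real
    using floor_add_int[of "x / 4" 1] by (simp add: add_divide_distrib)
  then show ?thesis
    unfolding periodic4_def cycle_def by (simp add: algebra_simps)
qed

lemma cycle_has_real_derivative:
  assumes "0 < x" and "x \<notin> range (\<lambda>k. 4 * of_int k) \<union> range (\<lambda>k. 4 * of_int k + xa)"
  obtains lam where "admissible_lambda (cycle x) lam"
    and "(cycle has_real_derivative sys_rhs a lam x (cycle x)) (at x)"
proof -
  define k where "k = \<lfloor>x / 4\<rfloor>"
  define b :: real where "b = 4 * of_int k"
  have "0 \<le> k" using \<open>0 < x\<close> by (simp add: k_def)
  have "b \<le> x" "x < b + 4" using floor_divide_bounds[of 4 x] by (simp_all add: k_def b_def)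
  moreover have "x \<noteq> b" "x \<noteq> b + xa" using assms(2) by (auto simp: b_def)
  ultimately consider "x \<in> {b<..<b + xa}" | "x \<in> {b + xa<..<b + 4}"
    by (cases "x < b + xa") auto
  then show thesis
  proof cases
    case 1
    have on_arc: "cycle y = lower_arc a 0 (y - b)" if "y \<in> {b<..<b + xa}" for y
      using that cycle_eq_profile[of k y] xa_lt_4 by (simp add: profile_def b_def)
    have "((\<lambda>y. lower_arc a 0 (y - b)) has_real_derivative
        sys_rhs a (-1) (x - b) (lower_arc a 0 (x - b)) * 1) (at x)"
      by (rule DERIV_chain2[OF lower_arc_has_real_derivative]) (auto intro!: derivative_eq_intros)
    moreover have "sys_rhs a (-1) (x - b) (lower_arc a 0 (x - b)) * 1 = sys_rhs a (-1) x (cycle x)"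
      using sys_rhs_lower_periodic[of a "x - b" k] on_arc[OF 1] by (simp add: b_def)
    ultimately have "((\<lambda>y. lower_arc a 0 (y - b)) has_real_derivative sys_rhs a (-1) x (cycle x)) (at x)"
      by simp
    then have "(cycle has_real_derivative sys_rhs a (-1) x (cycle x)) (at x)"
      by (rule has_field_derivative_transform_within_open[OF _ _ 1]) (simp_all add: on_arc)
    moreover have "admissible_lambda (cycle x) (-1)"
      using cycle_neg[of k x] 1 by (simp add: admissible_lambda_def b_def)
    ultimately show thesis using that by blast
  next
    case 2
    have zero: "cycle y = 0" if "y \<in> {b + xa<..<b + 4}" for y
      using that cycle_eq_0[of k y] by (simp add: b_def)
    then have "cycle x = 0" using 2 .
    have "(cycle has_real_derivative 0) (at x)"
      by (intro has_field_derivative_transform_within_open[OF DERIV_const _ 2]) (auto simp: zero)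
    moreover have "x \<in> sliding_set"
      using 2 \<open>0 \<le> k\<close> xa_gt_2 by (simp add: sliding_set_eq b_def)
    ultimately show thesis
      using sliding_set_admissible_lambda[of x a] \<open>cycle x = 0\<close> that by metis
  qed
qed

lemma is_solution_cycle: "is_solution a cycle"
  unfolding is_solution_def
proof (intro conjI allI impI)
  show "continuous_on {0..} cycle"
    using continuous_cycle by (rule continuous_on_subset) simp
  let ?S = "range (\<lambda>k. 4 * of_int k) \<union> range (\<lambda>k. 4 * of_int k + xa)"
  have "countable ?S" by simp
  moreover have "\<exists>lam. admissible_lambda (cycle x) lam \<and>
      (cycle has_real_derivative sys_rhs a lam x (cycle x)) (at x)" if "0 < x" "x \<notin> ?S" for x
    using cycle_has_real_derivative[OF that] by blast
  ultimately show "\<exists>S. countable S \<and> (\<forall>x. 0 < x \<and> x \<notin> S \<longrightarrow>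
      (\<exists>lam. admissible_lambda (cycle x) lam \<and>
        (cycle has_real_derivative sys_rhs a lam x (cycle x)) (at x)))"
    by blast
next
  fix c d assume cd: "0 \<le> c \<and> c < d \<and> (\<forall>x\<in>{c<..<d}. cycle x = 0)"
  have "2/3 \<le> c"
  proof (rule ccontr)
    assume "\<not> 2/3 \<le> c"
    define p where "p = (c + min d (2/3)) / 2"
    have "p \<in> {c<..<d}" "p < 2/3" using cd \<open>\<not> 2/3 \<le> c\<close> by (auto simp: p_def)
    then have "cycle p < 0"
      using cd xa_gt_2 by (intro cycle_neg[of 0]) auto
    with cd \<open>p \<in> {c<..<d}\<close> show False by auto
  qed
  then show "{c<..<d} \<subseteq> sliding_set" by (auto simp: sliding_set_eq)
qed

lemma is_sliding_cycle: "is_sliding cycle"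
  unfolding is_sliding_def
  using xa_gt_2 xa_lt_4 cycle_eq_0[of 0]
  by (intro exI[of _ xa] exI[of _ 4]) (auto simp: sliding_set_eq)

end

locale sliding_cycle_competitor = sliding_cycle a xa + nonpositive_solution a z
  for a xa :: real and z :: "real \<Rightarrow> real" +
  assumes periodic: "periodic4 z" and sliding: "is_sliding z"
begin

lemma zero_at_4: "z 4 = 0"
proof -
  obtain c d where cd: "0 \<le> c" "c < d" "\<forall>x\<in>{c<..<d}. z x = 0"
    using sliding unfolding is_sliding_def by blast
  define x0 where "x0 = (c + d) / 2"
  have "z x0 = 0" "0 \<le> x0" using cd by (auto simp: x0_def)
  define x where "x = x0 - 4 * of_int \<lfloor>x0 / 4\<rfloor>"
  have "z x = 0"
    using periodic4_reduce[OF periodic \<open>0 \<le> x0\<close>] \<open>z x0 = 0\<close> by (simp add: x_def)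
  moreover have "0 \<le> x" "x \<le> 4"
    using floor_divide_bounds[of 4 x0] unfolding x_def by linarith+
  ultimately show ?thesis
    by (intro zero_if_Phi_le[of x 4] Phi_4_le[OF a_pos]) auto
qed

lemma zero_at_0: "z 0 = 0"
proof -
  have "z (0 + 4) = z 0" using periodic unfolding periodic4_def by blast
  with zero_at_4 show ?thesis by simp
qed

lemma nonzero_near_0:
  assumes "0 < t" "t < 2/3"
  shows "z t \<noteq> 0"
proof
  assume "z t = 0"
  have "\<exists>s\<in>{0<..<t}. z s \<noteq> 0"
  proof (rule ccontr)
    assume "\<not> (\<exists>s\<in>{0<..<t}. z s \<noteq> 0)"
    then have "{0<..<t} \<subseteq> sliding_set"
      using assms by (intro zero_interval_subset_sliding_set) auto
    moreover have "t / 2 \<in> {0<..<t}" using assms by simp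
    ultimately have "t / 2 \<in> sliding_set" by blast
    then show False using assms by (simp add: sliding_set_eq)
  qed
  then obtain s where s: "s \<in> {0<..<t}" "z s \<noteq> 0" by blast
  obtain r where r: "r \<in> {0..s}" "z r = 0" and before: "\<And>u. u \<in> {r<..s} \<Longrightarrow> z u \<noteq> 0"
    using continuous_on_last_level[OF continuous_on_interval[of 0 s]] s zero_at_0 by auto
  obtain q where q: "q \<in> {s..t}" "z q = 0" and after: "\<And>u. u \<in> {s..<q} \<Longrightarrow> z u \<noteq> 0"
    using continuous_on_first_level[OF continuous_on_interval[of s t]] s \<open>z t = 0\<close> by auto
  have "r < s" "s < q" using r q s by (auto simp: less_le)
  moreover have "z u \<noteq> 0" if "u \<in> {r<..<q}" for u
    using that before[of u] after[of u] by (cases "u \<le> s") auto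
  ultimately have "Phi a q = Phi a r"
    using r q by (intro Phi_eq_at_consecutive_zeros) auto
  moreover have "Phi a r < Phi a q"
    using r q s assms \<open>r < s\<close> \<open>s < q\<close> by (intro Phi_strict_increasing) auto
  ultimately show False by simp
qed

lemma eq_lower_arc_until_xa:
  assumes "0 \<le> t" "t \<le> xa"
  shows "z t = lower_arc a 0 t"
proof -
  obtain q where q: "q \<in> {1/3..4}" "z q = 0" and first: "\<And>u. u \<in> {1/3..<q} \<Longrightarrow> z u \<noteq> 0"
    using continuous_on_first_level[OF continuous_on_interval[of "1/3" 4]] zero_at_4 by auto
  have "q \<noteq> 1/3"
  proof
    assume "q = 1/3"
    with q nonzero_near_0[of "1/3"] show False by simp
  qed
  have nonzero: "z u \<noteq> 0" if "u \<in> {0<..<q}" for u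
    using that first nonzero_near_0[of u] by (cases "u < 1/3") auto
  have "0 < q" using q by simp
  then have "Phi a q = Phi a 0"
    using zero_at_0 q nonzero by (intro Phi_eq_at_consecutive_zeros) auto
  then have "xa \<le> q" using Phi_0_less[of q] \<open>0 < q\<close> by force
  then show ?thesis
    using assms \<open>0 < q\<close> zero_at_0 nonzero xa_gt_2 by (intro eq_lower_arc) auto
qed

lemma eq_0_after_xa:
  assumes "xa \<le> t" "t \<le> 4"
  shows "z t = 0"
proof (rule zero_if_Phi_le[of xa])
  show "z xa = 0"
    using eq_lower_arc_until_xa[of xa] xa_gt_2 Phi_xa by (simp add: lower_arc_def)
  show "Phi a t \<le> Phi a r" if "r \<in> {xa..t}" for r
    using Phi_strict_decreasing[of r t a] that assms xa_gt_2 by (cases "r = t") auto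
qed (use assms xa_gt_2 in auto)

lemma eq_cycle:
  assumes "0 \<le> x"
  shows "z x = cycle x"
proof -
  define u where "u = x - 4 * of_int \<lfloor>x / 4\<rfloor>"
  have "0 \<le> u" "u < 4" using floor_divide_bounds[of 4 x] by (simp_all add: u_def)
  then have "z u = profile u"
    using eq_lower_arc_until_xa eq_0_after_xa by (simp add: profile_def)
  then show ?thesis
    using periodic4_reduce[OF periodic assms] by (simp add: cycle_def u_def)
qed

end

theorem theorem4:
  fixes a :: real
  assumes "a > 0"
  shows "\<exists>xa. 2 < xa \<and> xa < 4 \<and>
    (\<exists>yd. is_solution a yd \<and> periodic4 yd \<and> is_sliding yd \<and> in_closed_lower yd \<and>
       (\<forall>n::nat. \<forall>x. 4 * real n < x \<and> x < 4 * real n + xa \<longrightarrow> yd x < 0) \<and>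
       yd 0 = 0 \<and>
       (\<forall>n::nat. \<forall>x. 4 * real n + xa \<le> x \<and> x \<le> 4 * (real n + 1) \<longrightarrow> yd x = 0) \<and>
       (\<forall>z. is_solution a z \<and> periodic4 z \<and> is_sliding z \<and> in_closed_lower z
              \<longrightarrow> (\<forall>x\<ge>0. z x = yd x)))"
proof -
  obtain xa where "2 < xa" "xa < 4" "Phi a xa = Phi a 0"
    using Phi_returns_to_Phi_0[OF assms] .
  then interpret sliding_cycle a xa
    using assms by unfold_locales
  have unique: "z x = cycle x"
    if "is_solution a z" "periodic4 z" "is_sliding z" "in_closed_lower z" "0 \<le> x" for z x
  proof -
    interpret sliding_cycle_competitor a xa z
      using that by unfold_locales
    show ?thesis using eq_cycle[OF \<open>0 \<le> x\<close>] .
  qed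
  have "in_closed_lower cycle" using cycle_le_0 by (simp add: in_closed_lower_def)
  moreover have "cycle x < 0" if "4 * real n < x" "x < 4 * real n + xa" for n :: nat and x
    using cycle_neg[of "int n" x] that by simp
  moreover have "cycle x = 0" if "4 * real n + xa \<le> x" "x \<le> 4 * (real n + 1)" for n :: nat and x
    using cycle_eq_0[of "int n" x] that by (simp add: distrib_left)
  ultimately show ?thesis
    using \<open>2 < xa\<close> \<open>xa < 4\<close> is_solution_cycle periodic4_cycle is_sliding_cycle cycle_0 unique
    by (intro exI[of _ xa] exI[of _ cycle]) blast
qed

end
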